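(* Let $a\ge 4$ and $b\ge 5$ be integers, let $n=a+b-2$, and consider the 2-connected $(a,b)$-puzzle on $V=\{1,\dots,n\}$, i.e. the cycle set consisting of the two cycles $\alpha=(1\ 2\ \dots\ a)$ and $\beta=(a-1\ a\ a+1\ \dots\ n)$. Then any even permutation of $V$ can be generated in $O(n^2)$ shifts; that is, there is an absolute constant $K$ (independent of $a,b$) such that every even permutation of $V$ is a product of at most $Kn^2$ factors, each of which is one of $\alpha,\alpha^{-1},\beta,\beta^{-1}$.
   Context: Permutations are written in cycle notation. A shift along a cycle $(v_1\ \dots\ v_j)$ corresponds to applying the permutation $(v_1\ \dots\ v_j)$ or its inverse to the tokens placed on the vertices of $V$. *)

theory Defs
  imports "HOL-Combinatorics.Combinatorics"
begin

definition puzzle_alpha :: "nat \<Rightarrow> nat \<Rightarrow> nat \<Rightarrow> nat" where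
  "puzzle_alpha a b = cycle_of_list [1..<a+1]"

definition puzzle_beta :: "nat \<Rightarrow> nat \<Rightarrow> nat \<Rightarrow> nat" where
  "puzzle_beta a b = cycle_of_list [a-1..<a+b-1]"

definition puzzle_shifts :: "nat \<Rightarrow> nat \<Rightarrow> (nat \<Rightarrow> nat) set" where
  "puzzle_shifts a b = {puzzle_alpha a b, inv (puzzle_alpha a b),
                        puzzle_beta a b, inv (puzzle_beta a b)}"

end

theory Submission
  imports Defs
begin

(*
  The commutators of alpha and beta are products of two disjoint transpositions; conjugating
  them by shifts and multiplying two of the results gives a 3-cycle (a+1 n-1 a-2) as a word of
  bounded length. Conjugating by alpha, which fixes a+1 and n-1, moves the third point around
  alpha, so every 3-cycle (a+1 n-1 w) with w on alpha costs O(a). Products of 3-cycles through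
  the common pair a+1, n-1 give every 3-cycle (1 2 w) with w on alpha, and conjugating by beta,
  which fixes 1 and 2, moves w along beta; so each 3-cycle (1 2 w) costs O(n). Finally every
  even permutation p is a product of at most 3n such 3-cycles: at most three of them send a
  moved point x to p x while moving nothing but 1, 2, x and p x, and dividing p by their product
  fixes x without moving any point outside {1, 2} that p fixes.
*)

definition products_upto :: "('a \<Rightarrow> 'a) set \<Rightarrow> nat \<Rightarrow> ('a \<Rightarrow> 'a) set" where
  "products_upto S k = {foldr (\<circ>) fs id | fs. set fs \<subseteq> S \<and> length fs \<le> k}"

lemma products_upto_mono: "k \<le> m \<Longrightarrow> products_upto S k \<subseteq> products_upto S m"
  unfolding products_upto_def by fastforce

lemma id_in_products_upto: "id \<in> products_upto S k"
  unfolding products_upto_def by (rule CollectI, rule exI[of _ "[]"]) simp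

lemma generator_in_products_upto: "s \<in> S \<Longrightarrow> s \<in> products_upto S 1"
  unfolding products_upto_def by (rule CollectI, rule exI[of _ "[s]"]) simp

lemma foldr_comp_eq: "foldr (\<circ>) fs g = foldr (\<circ>) fs id \<circ> g"
  by (induction fs) (simp_all add: comp_assoc)

lemma products_upto_comp:
  assumes "p \<in> products_upto S k" "q \<in> products_upto S m"
  shows "p \<circ> q \<in> products_upto S (k + m)"
proof -
  obtain fs gs where "p = foldr (\<circ>) fs id" "set fs \<subseteq> S" "length fs \<le> k"
    "q = foldr (\<circ>) gs id" "set gs \<subseteq> S" "length gs \<le> m"
    using assms unfolding products_upto_def by blast
  moreover have "foldr (\<circ>) (fs @ gs) id = foldr (\<circ>) fs id \<circ> foldr (\<circ>) gs id"
    unfolding foldr_append by (rule foldr_comp_eq)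
  ultimately show ?thesis
    unfolding products_upto_def by (intro CollectI exI[of _ "fs @ gs"]) simp
qed

lemma products_upto_conj:
  assumes "g \<in> S" "inv g \<in> S" "t \<in> products_upto S k"
  shows "g \<circ> t \<circ> inv g \<in> products_upto S (k + 2)"
proof -
  have "g \<circ> t \<circ> inv g \<in> products_upto S (1 + k + 1)"
    using assms by (intro products_upto_comp generator_in_products_upto)
  then show ?thesis
    by (simp add: add.commute)
qed

lemma products_upto_products_upto:
  assumes "T \<subseteq> products_upto S c"
  shows "products_upto T k \<subseteq> products_upto S (c * k)"
proof -
  have "foldr (\<circ>) fs id \<in> products_upto S (c * length fs)" if "set fs \<subseteq> T" for fs
    using that
  proof (induction fs)
    case Nil
    show ?case
      using id_in_products_upto by (simp add: id_def)
  next
    case (Cons f fs)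
    have "f \<in> products_upto S c"
      using Cons.prems assms by auto
    moreover have "foldr (\<circ>) fs id \<in> products_upto S (c * length fs)"
      using Cons.prems by (intro Cons.IH) simp
    ultimately have "f \<circ> foldr (\<circ>) fs id \<in> products_upto S (c + c * length fs)"
      by (rule products_upto_comp)
    moreover have "foldr (\<circ>) (f # fs) id = f \<circ> foldr (\<circ>) fs id"
      by simp
    ultimately show ?case
      by (simp only: length_Cons mult_Suc_right)
  qed
  note words = this
  show ?thesis
  proof
    fix p assume "p \<in> products_upto T k"
    then obtain fs where "p = foldr (\<circ>) fs id" "set fs \<subseteq> T" "length fs \<le> k"
      unfolding products_upto_def by blast
    moreover have "products_upto S (c * length fs) \<subseteq> products_upto S (c * k)"
      using \<open>length fs \<le> k\<close> by (intro products_upto_mono mult_le_mono2)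
    ultimately show "p \<in> products_upto S (c * k)"
      using words by blast
  qed
qed

lemma products_upto_permutes:
  assumes "\<And>s. s \<in> S \<Longrightarrow> s permutes V" "p \<in> products_upto S k"
  shows "p permutes V"
proof -
  obtain fs where "p = foldr (\<circ>) fs id" "set fs \<subseteq> S"
    using assms(2) unfolding products_upto_def by blast
  then show ?thesis
    using assms(1) by (induction fs arbitrary: p) (auto intro: permutes_id permutes_compose)
qed

lemma products_upto_evenperm:
  assumes "\<And>s. s \<in> S \<Longrightarrow> permutation s \<and> evenperm s" "p \<in> products_upto S k"
  shows "permutation p \<and> evenperm p"
proof -
  obtain fs where "p = foldr (\<circ>) fs id" "set fs \<subseteq> S"
    using assms(2) unfolding products_upto_def by blast
  then show ?thesis
    using assms(1) by (induction fs arbitrary: p) (auto simp: permutation_compose evenperm_comp)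
qed

lemma cycle_of_list_3_apply:
  "distinct [x, y, z] \<Longrightarrow>
    cycle_of_list [x, y, z] i = (if i = x then y else if i = y then z else if i = z then x else i)"
  by (auto simp: transpose_def)

lemma evenperm_cycle_of_list_3: "distinct [x, y, z] \<Longrightarrow> evenperm (cycle_of_list [x, y, z])"
  by (simp add: evenperm_comp evenperm_swap permutation_swap_id)

lemma cycle_of_list_3_via_pair:
  assumes "distinct [q, r, x, y, w]"
  shows "cycle_of_list [q, r, x] \<circ> cycle_of_list [q, r, y] \<circ> cycle_of_list [q, r, w]
    \<circ> cycle_of_list [q, r, x] \<circ> cycle_of_list [q, r, y] = cycle_of_list [x, y, w]"
proof
  fix i
  consider "i = q" | "i = r" | "i = x" | "i = y" | "i = w" | "i \<notin> {q, r, x, y, w}"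
    by auto
  then show "(cycle_of_list [q, r, x] \<circ> cycle_of_list [q, r, y] \<circ> cycle_of_list [q, r, w]
    \<circ> cycle_of_list [q, r, x] \<circ> cycle_of_list [q, r, y]) i = cycle_of_list [x, y, w] i"
    using assms by cases (auto simp: cycle_of_list_3_apply simp del: cycle_of_list.simps)
qed

lemma cycle_of_list_3_via_pair':
  assumes "distinct [q, r, x, y]"
  shows "cycle_of_list [q, r, y] \<circ> cycle_of_list [q, r, x] \<circ> cycle_of_list [q, r, x]
    = cycle_of_list [x, y, q]"
proof
  fix i
  consider "i = q" | "i = r" | "i = x" | "i = y" | "i \<notin> {q, r, x, y}"
    by auto
  then show "(cycle_of_list [q, r, y] \<circ> cycle_of_list [q, r, x] \<circ> cycle_of_list [q, r, x]) i
    = cycle_of_list [x, y, q] i"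
    using assms by cases (auto simp: cycle_of_list_3_apply simp del: cycle_of_list.simps)
qed

definition cycles_3_through :: "'a \<Rightarrow> 'a \<Rightarrow> 'a set \<Rightarrow> ('a \<Rightarrow> 'a) set" where
  "cycles_3_through q r V = {cycle_of_list [q, r, w] | w. w \<in> V - {q, r}}"

lemma cycles_3_through_move_point:
  assumes "x \<in> V - {q, r}" "y \<in> V" "y \<noteq> x" "q \<noteq> r"
  obtains c where "c \<in> products_upto (cycles_3_through q r V) 3"
    and "c x = y" and "\<And>z. z \<notin> {q, r, x, y} \<Longrightarrow> c z = z"
proof -
  let ?C = "\<lambda>w. cycle_of_list [q, r, w]"
  have gen: "?C w \<in> products_upto (cycles_3_through q r V) 1" if "w \<in> V - {q, r}" for w
    using that unfolding cycles_3_through_def by (intro generator_in_products_upto) blast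
  have C_apply: "?C w z = (if z = q then r else if z = r then w else if z = w then q else z)"
    if "w \<in> V - {q, r}" for w z
    using that assms(4) by (intro cycle_of_list_3_apply) auto
  consider "y = q" | "y = r" | "y \<in> V - {q, r}"
    using assms(2) by blast
  then show thesis
  proof cases
    case 1
    show thesis
    proof (rule that[of "?C x"])
      show "?C x \<in> products_upto (cycles_3_through q r V) 3"
        by (rule subsetD[OF products_upto_mono gen[OF assms(1)]]) simp
    qed (use 1 assms C_apply in auto)
  next
    case 2
    show thesis
    proof (rule that[of "?C x \<circ> ?C x"])
      show "?C x \<circ> ?C x \<in> products_upto (cycles_3_through q r V) 3"
        using products_upto_comp[OF gen[OF assms(1)] gen[OF assms(1)]]
        by (rule subsetD[OF products_upto_mono, rotated]) simp
    qed (use 2 assms C_apply in auto)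
  next
    case 3
    show thesis
    proof (rule that[of "?C y \<circ> ?C y \<circ> ?C x"])
      show "?C y \<circ> ?C y \<circ> ?C x \<in> products_upto (cycles_3_through q r V) 3"
        using products_upto_comp[OF products_upto_comp[OF gen[OF 3] gen[OF 3]] gen[OF assms(1)]]
        by (simp add: numeral_3_eq_3 del: cycle_of_list.simps)
    qed (use 3 assms C_apply in auto)
  qed
qed

lemma moved_points_inv_comp_psubset:
  assumes "bij c" "inj p" "x \<in> W" "p x \<noteq> x" "c x = p x"
    and "\<And>z. z \<notin> {q, r, x, p x} \<Longrightarrow> c z = z" "q \<notin> W" "r \<notin> W"
  shows "{w \<in> W. (inv c \<circ> p) w \<noteq> w} \<subset> {w \<in> W. p w \<noteq> w}"
proof -
  have "(inv c \<circ> p) w = w" if "w \<in> W" "p w = w" for w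
  proof -
    have "w \<noteq> p x"
      using that assms(2,4) by (metis injD)
    moreover have "w \<noteq> x" "w \<noteq> q" "w \<noteq> r"
      using that assms(4,7,8) by auto
    ultimately have "c w = w"
      using assms(6) by blast
    then show ?thesis
      using that assms(1) by (simp add: inv_f_eq bij_is_inj)
  qed
  moreover have "(inv c \<circ> p) x = x"
    using assms(1,5) by (simp add: inv_f_eq bij_is_inj)
  ultimately show ?thesis
    using assms(3,4) by blast
qed

lemma cycles_3_through_permutes:
  assumes "q \<in> V" "r \<in> V" "q \<noteq> r" "s \<in> cycles_3_through q r V"
  shows "s permutes V"
proof -
  obtain w where w: "s = cycle_of_list [q, r, w]" "w \<in> V"
    using assms(4) unfolding cycles_3_through_def by blast
  then have "set [q, r, w] \<subseteq> V"
    using assms(1,2) by auto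
  then show ?thesis
    unfolding w(1) by (rule permutes_subset[OF cycle_permutes])
qed

lemma cycles_3_through_evenperm:
  assumes "q \<noteq> r" "s \<in> cycles_3_through q r V"
  shows "permutation s \<and> evenperm s"
proof -
  obtain w where w: "s = cycle_of_list [q, r, w]" "w \<in> V - {q, r}"
    using assms(2) unfolding cycles_3_through_def by blast
  then have "distinct [q, r, w]"
    using assms(1) by auto
  then show ?thesis
    unfolding w(1) by (intro conjI permutation_of_cycle evenperm_cycle_of_list_3)
qed

lemma cycles_3_through_reduction_step:
  assumes "finite V" "q \<in> V" "r \<in> V" "q \<noteq> r" "p permutes V" "evenperm p"
    and "x \<in> V - {q, r}" "p x \<noteq> x"
  obtains c p' where "c \<in> products_upto (cycles_3_through q r V) 3"
    and "p = c \<circ> p'" "p' permutes V" "evenperm p'"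
    and "card {w \<in> V - {q, r}. p' w \<noteq> w} < card {w \<in> V - {q, r}. p w \<noteq> w}"
proof -
  have "p x \<in> V"
    using assms(7) permutes_in_image[OF assms(5)] by blast
  then obtain c where c: "c \<in> products_upto (cycles_3_through q r V) 3"
    "c x = p x" and c_fix: "\<And>z. z \<notin> {q, r, x, p x} \<Longrightarrow> c z = z"
    using assms(4,7,8) by (elim cycles_3_through_move_point) auto
  have c_perm: "c permutes V"
    using cycles_3_through_permutes[OF assms(2-4)] c(1) by (rule products_upto_permutes)
  have c_even: "permutation c \<and> evenperm c"
    using cycles_3_through_evenperm[OF assms(4)] c(1) by (rule products_upto_evenperm)
  show thesis
  proof (rule that[OF c(1)])
    show "p = c \<circ> (inv c \<circ> p)"
      using c_perm by (simp add: o_assoc permutes_inv_o(1))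
    show "inv c \<circ> p permutes V"
      by (rule permutes_compose[OF assms(5) permutes_inv[OF c_perm]])
    show "evenperm (inv c \<circ> p)"
      using c_even assms(6) permutes_imp_permutation[OF assms(1,5)]
      by (simp add: evenperm_comp evenperm_inv permutation_inverse)
    have "{w \<in> V - {q, r}. (inv c \<circ> p) w \<noteq> w} \<subset> {w \<in> V - {q, r}. p w \<noteq> w}"
      using permutes_bij[OF c_perm] permutes_inj[OF assms(5)] assms(7,8) c(2) c_fix
      by (rule moved_points_inv_comp_psubset) auto
    then show "card {w \<in> V - {q, r}. (inv c \<circ> p) w \<noteq> w} < card {w \<in> V - {q, r}. p w \<noteq> w}"
      using assms(1) by (intro psubset_card_mono) simp_all
  qed
qed

lemma evenperm_in_products_upto_cycles_3_through:
  assumes "finite V" "q \<in> V" "r \<in> V" "q \<noteq> r" "p permutes V" "evenperm p"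
  shows "p \<in> products_upto (cycles_3_through q r V)
    (3 * card {w \<in> V - {q, r}. p w \<noteq> w})"
  using assms(5,6)
proof (induction "card {w \<in> V - {q, r}. p w \<noteq> w}" arbitrary: p rule: less_induct)
  case less
  show ?case
  proof (cases "\<exists>x \<in> V - {q, r}. p x \<noteq> x")
    case False
    have "p permutes {q, r}"
      using less.prems(1) by (rule permutes_superset) (use False in blast)
    then have "p = id"
      using less.prems(2) assms(4) by (auto simp: permutes_doubleton_iff evenperm_swap)
    then show ?thesis
      using id_in_products_upto by simp
  next
    case True
    then obtain x where x: "x \<in> V - {q, r}" "p x \<noteq> x"
      by blast
    obtain c p' where c: "c \<in> products_upto (cycles_3_through q r V) 3"
      and p': "p = c \<circ> p'" "p' permutes V" "evenperm p'"
      and fewer: "card {w \<in> V - {q, r}. p' w \<noteq> w} < card {w \<in> V - {q, r}. p w \<noteq> w}"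
      using assms(1-4) less.prems x by (rule cycles_3_through_reduction_step)
    have "p \<in> products_upto (cycles_3_through q r V)
        (3 + 3 * card {w \<in> V - {q, r}. p' w \<noteq> w})"
      unfolding p'(1) using c less.hyps[OF fewer p'(2,3)] by (rule products_upto_comp)
    moreover have "3 + 3 * card {w \<in> V - {q, r}. p' w \<noteq> w} \<le> 3 * card {w \<in> V - {q, r}. p w \<noteq> w}"
      using fewer by simp
    ultimately show ?thesis
      using products_upto_mono by blast
  qed
qed

lemma cycle_of_list_upt_apply:
  assumes "m < k"
  shows "cycle_of_list [m..<Suc k] x = (if m \<le> x \<and> x < k then Suc x else if x = k then m else x)"
  using assms
proof (induction "k - m" arbitrary: m)
  case 0
  then show ?case by simp
next
  case (Suc d)
  have "[m..<Suc k] = m # Suc m # [Suc (Suc m)..<Suc k]"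
    "[Suc m..<Suc k] = Suc m # [Suc (Suc m)..<Suc k]"
    using Suc.prems by (simp_all add: upt_conv_Cons del: upt_Suc)
  then have split: "cycle_of_list [m..<Suc k] = transpose m (Suc m) \<circ> cycle_of_list [Suc m..<Suc k]"
    by (simp only: cycle_of_list.simps(1))
  show ?case
  proof (cases "Suc m = k")
    case True
    then show ?thesis
      by (simp add: upt_conv_Cons transpose_def del: upt_Suc)
  next
    case False
    then have "cycle_of_list [Suc m..<Suc k] x
        = (if Suc m \<le> x \<and> x < k then Suc x else if x = k then Suc m else x)"
      using Suc by (intro Suc.hyps) auto
    then show ?thesis
      using Suc.prems unfolding split by (auto simp: transpose_def)
  qed
qed

lemma inv_cycle_of_list_upt:
  assumes "m < k"
  shows "inv (cycle_of_list [m..<Suc k]) = (\<lambda>x. if m < x \<and> x \<le> k then x - 1 else if x = m then k else x)"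
  using assms by (intro inv_equality)
    (auto simp: cycle_of_list_upt_apply simp del: cycle_of_list.simps upt_Suc)

lemma conjugation_of_transpose:
  assumes "bij g"
  shows "g \<circ> transpose x y \<circ> inv g = transpose (g x) (g y)"
proof (cases "x = y")
  case True
  then show ?thesis
    using surj_iff[THEN iffD1, OF bij_is_surj[OF assms]] by simp
next
  case False
  then show ?thesis
    using conjugation_of_cycle[OF _ assms, of "[x, y]"] by simp
qed

lemma conjugation_of_transpose_pair:
  assumes "bij g"
  shows "g \<circ> (transpose w x \<circ> transpose y z) \<circ> inv g = transpose (g w) (g x) \<circ> transpose (g y) (g z)"
proof -
  have "g \<circ> (transpose w x \<circ> transpose y z) \<circ> inv g
      = (g \<circ> transpose w x \<circ> inv g) \<circ> (g \<circ> transpose y z \<circ> inv g)"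
    using assms by (simp add: fun_eq_iff bij_is_inj)
  then show ?thesis
    using assms by (simp add: conjugation_of_transpose)
qed

lemma cycle_of_list_3_sweep:
  assumes "cycle_of_list [x, y, z] \<in> products_upto S k"
    and "g \<in> S" "inv g \<in> S" "bij g" "g x = x" "g y = y"
    and "\<And>i. i < d \<Longrightarrow> g (z + i) = Suc (z + i)" "\<And>i. i \<le> d \<Longrightarrow> distinct [x, y, z + i]"
  shows "i \<le> d \<Longrightarrow> cycle_of_list [x, y, z + i] \<in> products_upto S (k + 2 * i)"
proof (induction i)
  case 0
  then show ?case
    using assms(1) by (simp only: add_0_right mult_0_right)
next
  case (Suc i)
  have "g \<circ> cycle_of_list [x, y, z + i] \<circ> inv g \<in> products_upto S (k + 2 * i + 2)"
    using assms(2,3) Suc.IH[OF Suc_leD[OF Suc.prems]] by (rule products_upto_conj)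
  moreover have "g \<circ> cycle_of_list [x, y, z + i] \<circ> inv g = cycle_of_list [x, y, z + Suc i]"
    using conjugation_of_cycle[OF assms(8) assms(4), of i] Suc.prems assms(5,6,7) by simp
  moreover have "k + 2 * i + 2 = k + 2 * Suc i"
    by simp
  ultimately show ?case
    by (simp only:)
qed

(* alpha = (1 ... a) and beta = (a-1 ... n), written with u = a - 2 and v = n - 1 so that no
   subtraction occurs. *)
locale two_cycle_puzzle =
  fixes u v :: nat
  assumes u_ge: "2 \<le> u" and v_ge: "u + 4 \<le> v"
begin

definition \<alpha> :: "nat \<Rightarrow> nat" where "\<alpha> = cycle_of_list [1..<u + 3]"
definition \<beta> :: "nat \<Rightarrow> nat" where "\<beta> = cycle_of_list [u + 1..<v + 2]"
abbreviation shifts :: "(nat \<Rightarrow> nat) set" where "shifts \<equiv> {\<alpha>, inv \<alpha>, \<beta>, inv \<beta>}"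

lemma alpha_apply [simp]: "\<alpha> x = (if 1 \<le> x \<and> x < u + 2 then x + 1 else if x = u + 2 then 1 else x)"
proof -
  have "u + 3 = Suc (u + 2)"
    by simp
  then show ?thesis
    unfolding \<alpha>_def using cycle_of_list_upt_apply[of 1 "u + 2" x] by (simp only:) simp
qed

lemma inv_alpha_apply [simp]: "inv \<alpha> x = (if 1 < x \<and> x \<le> u + 2 then x - 1 else if x = 1 then u + 2 else x)"
proof -
  have "u + 3 = Suc (u + 2)"
    by simp
  then show ?thesis
    unfolding \<alpha>_def by (simp only:) (subst inv_cycle_of_list_upt, simp_all)
qed

lemma beta_apply [simp]: "\<beta> x = (if u + 1 \<le> x \<and> x < v + 1 then x + 1 else if x = v + 1 then u + 1 else x)"
proof -
  have "v + 2 = Suc (v + 1)"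
    by simp
  then show ?thesis
    unfolding \<beta>_def using cycle_of_list_upt_apply[of "u + 1" "v + 1" x] v_ge by (simp only:) simp
qed

lemma inv_beta_apply [simp]: "inv \<beta> x = (if u + 1 < x \<and> x \<le> v + 1 then x - 1 else if x = u + 1 then v + 1 else x)"
proof -
  have "v + 2 = Suc (v + 1)"
    by simp
  then show ?thesis
    unfolding \<beta>_def using v_ge by (simp only:) (subst inv_cycle_of_list_upt, simp_all)
qed

lemma bij_alpha: "bij \<alpha>" and bij_beta: "bij \<beta>"
  unfolding \<alpha>_def \<beta>_def by (rule permutation_bijective[OF permutation_of_cycle])+

lemma bij_shift: "g \<in> shifts \<Longrightarrow> bij g"
  using bij_alpha bij_beta by (auto intro: bij_imp_bij_inv)

lemma inv_shift: "g \<in> shifts \<Longrightarrow> inv g \<in> shifts"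
  using bij_alpha bij_beta by (auto simp: inv_inv_eq)

lemma shift_regions:
  obtains "x = 0" | "x = 1" | "2 \<le> x" "x < u" | "x = u" | "x = u + 1" | "x = u + 2"
    | "u + 2 < x" "x < v" | "x = v" | "x = v + 1" | "v + 1 < x"
  by linarith

lemma commutator_shifts: "inv \<beta> \<circ> inv \<alpha> \<circ> \<beta> \<circ> \<alpha> = transpose (u + 2) (u + 1) \<circ> transpose u (v + 1)"
proof
  fix x
  show "(inv \<beta> \<circ> inv \<alpha> \<circ> \<beta> \<circ> \<alpha>) x = (transpose (u + 2) (u + 1) \<circ> transpose u (v + 1)) x"
    using u_ge v_ge by (cases x rule: shift_regions) (auto simp: transpose_def)
qed

lemma commutator_shifts': "inv \<beta> \<circ> \<alpha> \<circ> \<beta> \<circ> inv \<alpha> = transpose 1 (u + 2) \<circ> transpose (u + 1) (v + 1)"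
proof
  fix x
  show "(inv \<beta> \<circ> \<alpha> \<circ> \<beta> \<circ> inv \<alpha>) x = (transpose 1 (u + 2) \<circ> transpose (u + 1) (v + 1)) x"
    using u_ge v_ge by (cases x rule: shift_regions) (auto simp: transpose_def)
qed

lemma shift_word_4:
  assumes "f1 \<in> shifts" "f2 \<in> shifts" "f3 \<in> shifts" "f4 \<in> shifts"
  shows "f1 \<circ> f2 \<circ> f3 \<circ> f4 \<in> products_upto shifts 4"
proof -
  have "f1 \<circ> f2 \<circ> f3 \<circ> f4 \<in> products_upto shifts (1 + 1 + 1 + 1)"
    using assms by (intro products_upto_comp generator_in_products_upto)
  moreover have "(1 + 1 + 1 + 1 :: nat) = 4"
    by simp
  ultimately show ?thesis
    by (simp only:)
qed

lemma conj_transpose_pair_in_products_upto: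
  assumes "g \<in> shifts" "transpose w x \<circ> transpose y z \<in> products_upto shifts k"
  shows "transpose (g w) (g x) \<circ> transpose (g y) (g z) \<in> products_upto shifts (k + 2)"
  using products_upto_conj[OF assms(1) inv_shift[OF assms(1)] assms(2)]
  unfolding conjugation_of_transpose_pair[OF bij_shift[OF assms(1)]] .

lemma conj_cycle_of_list_3_in_products_upto:
  assumes "g \<in> shifts" "distinct [x, y, z]" "cycle_of_list [x, y, z] \<in> products_upto shifts k"
  shows "cycle_of_list [g x, g y, g z] \<in> products_upto shifts (k + 2)"
  using products_upto_conj[OF assms(1) inv_shift[OF assms(1)] assms(3)]
  unfolding conjugation_of_cycle[OF assms(2) bij_shift[OF assms(1)]] list.map .

lemma cycle_of_list_3_from_commutators: "cycle_of_list [u + 3, v, u] \<in> products_upto shifts 16"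
proof -
  have c: "transpose (u + 2) (u + 1) \<circ> transpose u (v + 1) \<in> products_upto shifts 4"
    "transpose 1 (u + 2) \<circ> transpose (u + 1) (v + 1) \<in> products_upto shifts 4"
    unfolding commutator_shifts[symmetric] commutator_shifts'[symmetric]
    by (simp_all add: shift_word_4)
  have t1: "transpose (u + 1) (v + 1) \<circ> transpose u v \<in> products_upto shifts 6"
    using conj_transpose_pair_in_products_upto[OF _ c(1), of "inv \<beta>"] u_ge v_ge by simp
  have e1: "transpose 1 (u + 1) \<circ> transpose (v + 1) v \<in> products_upto shifts 6"
    using conj_transpose_pair_in_products_upto[OF _ c(2), of "inv \<beta>"] u_ge v_ge by simp
  have e2: "transpose (u + 2) u \<circ> transpose (v + 1) v \<in> products_upto shifts 8"
    using conj_transpose_pair_in_products_upto[OF _ e1, of "inv \<alpha>"] u_ge v_ge by simp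
  have t2: "transpose (u + 3) u \<circ> transpose (u + 1) (v + 1) \<in> products_upto shifts 10"
    using conj_transpose_pair_in_products_upto[OF _ e2, of \<beta>] u_ge v_ge by (simp add: numeral_3_eq_3)
  have "(transpose (u + 1) (v + 1) \<circ> transpose u v)
      \<circ> (transpose (u + 3) u \<circ> transpose (u + 1) (v + 1)) \<in> products_upto shifts (6 + 10)"
    using t1 t2 by (rule products_upto_comp)
  moreover have "(transpose (u + 1) (v + 1) \<circ> transpose u v)
      \<circ> (transpose (u + 3) u \<circ> transpose (u + 1) (v + 1)) = cycle_of_list [u + 3, v, u]"
    using u_ge v_ge by (auto simp: fun_eq_iff transpose_def)
  ultimately show ?thesis
    by simp
qed

lemma cycle_of_list_alpha_orbit_in_products_upto:
  assumes "1 \<le> w" "w \<le> u + 2"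
  shows "cycle_of_list [u + 3, v, w] \<in> products_upto shifts (2 * u + 24)"
proof -
  have "cycle_of_list [u + 3, v, u + 2] \<in> products_upto shifts (16 + 2 * 2)"
    by (rule cycle_of_list_3_sweep[where g = \<alpha> and d = 2])
      (use u_ge v_ge bij_alpha cycle_of_list_3_from_commutators in auto)
  then have "cycle_of_list [\<alpha> (u + 3), \<alpha> v, \<alpha> (u + 2)] \<in> products_upto shifts (16 + 2 * 2 + 2)"
    using v_ge by (intro conj_cycle_of_list_3_in_products_upto) auto
  then have "cycle_of_list [u + 3, v, 1] \<in> products_upto shifts 22"
    using v_ge by simp
  then have "cycle_of_list [u + 3, v, 1 + (w - 1)] \<in> products_upto shifts (22 + 2 * (w - 1))"
    by (rule cycle_of_list_3_sweep[where g = \<alpha> and d = "u + 1"])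
      (use assms u_ge v_ge bij_alpha in auto)
  moreover have "products_upto shifts (22 + 2 * (w - 1)) \<subseteq> products_upto shifts (2 * u + 24)"
    using assms by (intro products_upto_mono) simp
  ultimately show ?thesis
    using assms by auto
qed

lemma cycle_of_list_1_2_in_products_upto:
  assumes "3 \<le> w" "w \<le> v + 1"
  shows "cycle_of_list [1, 2, w] \<in> products_upto shifts (30 * (v + 1))"
proof -
  let ?X = "\<lambda>i. cycle_of_list [u + 3, v, i]" and ?c = "2 * u + 24"
  have X: "?X i \<in> products_upto shifts ?c" if "1 \<le> i" "i \<le> u + 2" for i
    using that by (rule cycle_of_list_alpha_orbit_in_products_upto)
  show ?thesis
  proof (cases "w \<le> u + 2")
    case True
    have "?X 1 \<circ> ?X 2 \<circ> ?X w \<circ> ?X 1 \<circ> ?X 2 \<in> products_upto shifts (?c + ?c + ?c + ?c + ?c)"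
      using u_ge assms(1) True by (intro products_upto_comp X) simp_all
    moreover have "?X 1 \<circ> ?X 2 \<circ> ?X w \<circ> ?X 1 \<circ> ?X 2 = cycle_of_list [1, 2, w]"
      using u_ge v_ge assms(1) True by (intro cycle_of_list_3_via_pair) auto
    moreover have "products_upto shifts (?c + ?c + ?c + ?c + ?c) \<subseteq> products_upto shifts (30 * (v + 1))"
      using v_ge by (intro products_upto_mono) simp
    ultimately show ?thesis
      by auto
  next
    case False
    have "?X 2 \<circ> ?X 1 \<circ> ?X 1 \<in> products_upto shifts (?c + ?c + ?c)"
      using u_ge by (intro products_upto_comp X) simp_all
    moreover have "?X 2 \<circ> ?X 1 \<circ> ?X 1 = cycle_of_list [1, 2, u + 3]"
      using u_ge v_ge by (intro cycle_of_list_3_via_pair') auto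
    ultimately have "cycle_of_list [1, 2, u + 3] \<in> products_upto shifts (3 * ?c)"
      by simp
    then have "cycle_of_list [1, 2, u + 3 + (w - (u + 3))]
        \<in> products_upto shifts (3 * ?c + 2 * (w - (u + 3)))"
      by (rule cycle_of_list_3_sweep[where g = \<beta> and d = "v - u - 2"])
        (use assms False u_ge v_ge bij_beta in auto)
    moreover have "products_upto shifts (3 * ?c + 2 * (w - (u + 3)))
        \<subseteq> products_upto shifts (30 * (v + 1))"
      using assms v_ge by (intro products_upto_mono) simp
    ultimately show ?thesis
      using False by auto
  qed
qed

theorem evenperm_in_products_upto_shifts:
  assumes "p permutes {1..v + 1}" "evenperm p"
  shows "p \<in> products_upto shifts (90 * (v + 1)\<^sup>2)"
proof -
  let ?moved = "{w \<in> {1..v + 1} - {1, 2}. p w \<noteq> w}"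
  have "p \<in> products_upto (cycles_3_through 1 2 {1..v + 1}) (3 * card ?moved)"
    using assms v_ge by (intro evenperm_in_products_upto_cycles_3_through) auto
  moreover have "card ?moved \<le> card {1..v + 1}"
    by (rule card_mono) auto
  ultimately have "p \<in> products_upto (cycles_3_through 1 2 {1..v + 1}) (3 * (v + 1))"
    using products_upto_mono[of "3 * card ?moved" "3 * (v + 1)"] by auto
  moreover have "cycles_3_through 1 2 {1..v + 1} \<subseteq> products_upto shifts (30 * (v + 1))"
    using cycle_of_list_1_2_in_products_upto unfolding cycles_3_through_def by auto
  ultimately have "p \<in> products_upto shifts (30 * (v + 1) * (3 * (v + 1)))"
    using products_upto_products_upto by blast
  moreover have "30 * (v + 1) * (3 * (v + 1)) = 90 * (v + 1)\<^sup>2"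
    by (simp add: power2_eq_square algebra_simps)
  ultimately show ?thesis
    by (simp only:)
qed

end

theorem lemma2:
  shows "\<exists>K::nat. \<forall>a b :: nat. a \<ge> 4 \<longrightarrow> b \<ge> 5 \<longrightarrow>
     (\<forall>p. p permutes {1..a+b-2} \<longrightarrow> evenperm p \<longrightarrow>
        (\<exists>fs. set fs \<subseteq> puzzle_shifts a b \<and> length fs \<le> K * (a+b-2)^2 \<and>
              p = foldr (\<circ>) fs id))"
proof (intro exI[of _ 90] allI impI)
  fix a b :: nat and p :: "nat \<Rightarrow> nat"
  assume "4 \<le> a" "5 \<le> b" "p permutes {1..a + b - 2}" "evenperm p"
  interpret two_cycle_puzzle "a - 2" "a + b - 3"
    using \<open>4 \<le> a\<close> \<open>5 \<le> b\<close> by unfold_locales simp_all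
  have n: "a + b - 2 = a + b - 3 + 1"
    using \<open>4 \<le> a\<close> by simp
  have "a + 1 = a - 2 + 3" "a - 1 = a - 2 + 1" "a + b - 1 = a + b - 3 + 2"
    using \<open>4 \<le> a\<close> \<open>5 \<le> b\<close> by simp_all
  then have "puzzle_alpha a b = \<alpha>" "puzzle_beta a b = \<beta>"
    unfolding puzzle_alpha_def puzzle_beta_def \<alpha>_def \<beta>_def by (simp_all only:)
  then have "puzzle_shifts a b = shifts"
    unfolding puzzle_shifts_def by (simp only:)
  moreover have "p \<in> products_upto shifts (90 * (a + b - 2)\<^sup>2)"
    using \<open>p permutes {1..a + b - 2}\<close> \<open>evenperm p\<close> unfolding n
    by (rule evenperm_in_products_upto_shifts)
  ultimately show "\<exists>fs. set fs \<subseteq> puzzle_shifts a b \<and> length fs \<le> 90 * (a + b - 2)\<^sup>2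
      \<and> p = foldr (\<circ>) fs id"
    unfolding products_upto_def by auto
qed

end
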